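(* Let $k\ge 3$ and let $\sigma$ be a (possibly vincular) pattern of length $k$ whose underlying permutation is $k(k-1)\cdots 1$ (with any choice of underlined entries). Then for every positive integer $n$, \[\mathrm{Sort}_n(\mathrm{SC}_\sigma)=\mathrm{Av}_n(\mathrm{rev}(\sigma),132).\]
   Context: $\mathfrak S_n$ is the set of permutations of $\{1,\dots,n\}$. A vincular pattern is a permutation some of whose entries are underlined; a sequence contains it if it has a subsequence with the same relative order in which entries corresponding to adjacent underlined entries of the pattern occupy consecutive positions of the sequence; otherwise it avoids it. $\mathrm{Av}_n(\dots)$ is the set of permutations in $\mathfrak S_n$ avoiding all listed patterns. $\mathrm{rev}(\sigma)$ is the reverse of $\sigma$, with the underlining reversed accordingly. For a pattern $\sigma$, the $\sigma$-avoiding stack-sorting map $\mathrm{SC}_\sigma$ acts on $\tau$: read entries left to right; when the next entry $x$ is read, if pushing $x$ yields a stack whose entries read top to bottom (adjacency in the stack counting as consecutive positions) avoid $\sigma$, push $x$; otherwise pop the top stack entry to the output and repeat. At the end pop all remaining entries to the output; the output is $\mathrm{SC}_\sigma(\tau)$. West's stack-sorting map is $s=\mathrm{SC}_{21}$. $\mathrm{Sort}_n(\mathrm{SC}_\sigma)=\{\tau\in\mathfrak S_n : s(\mathrm{SC}_\sigma(\tau))=12\cdots n\}$. *)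

theory Defs
  imports Main
begin

text \<open>A (vincular) pattern is a pair (p, U): p is the underlying permutation
  (a list of the numbers 1..k) and U is the set of (0-based) positions of
  underlined entries.\<close>
type_synonym vpat = "nat list \<times> nat set"

definition perms :: "nat \<Rightarrow> nat list set" where
  "perms n = {xs. distinct xs \<and> set xs = {1..n}}"

definition vcontains :: "nat list \<Rightarrow> vpat \<Rightarrow> bool" where
  "vcontains xs \<sigma> \<longleftrightarrow> (case \<sigma> of (p, U) \<Rightarrow>
     (\<exists>f :: nat \<Rightarrow> nat.
        strict_mono_on {0..<length p} f \<and>
        (\<forall>i<length p. f i < length xs) \<and>
        (\<forall>i<length p. \<forall>j<length p. (xs ! f i < xs ! f j \<longleftrightarrow> p ! i < p ! j)) \<and>
        (\<forall>i. Suc i < length p \<and> i \<in> U \<and> Suc i \<in> U \<longrightarrow> f (Suc i) = Suc (f i))))"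

definition vavoids :: "nat list \<Rightarrow> vpat \<Rightarrow> bool" where
  "vavoids xs \<sigma> \<longleftrightarrow> \<not> vcontains xs \<sigma>"

definition vrev :: "vpat \<Rightarrow> vpat" where
  "vrev \<sigma> = (case \<sigma> of (p, U) \<Rightarrow> (rev p, (\<lambda>i. length p - 1 - i) ` U))"

definition Av :: "nat \<Rightarrow> vpat list \<Rightarrow> nat list set" where
  "Av n ps = {\<tau> \<in> perms n. \<forall>\<sigma>\<in>set ps. vavoids \<tau> \<sigma>}"

text \<open>Arguments: pattern, remaining
  input, current stack (listed top to bottom).
  If the stack is empty the entry is pushed (a one-entry stack cannot contain
  a pattern of length at least 2).\<close>
fun sc_aux :: "vpat \<Rightarrow> nat list \<Rightarrow> nat list \<Rightarrow> nat list" where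
  "sc_aux \<sigma> [] st = st"
| "sc_aux \<sigma> (x # xs) [] = sc_aux \<sigma> xs [x]"
| "sc_aux \<sigma> (x # xs) (y # st) =
     (if vavoids (x # y # st) \<sigma> then sc_aux \<sigma> xs (x # y # st)
      else y # sc_aux \<sigma> (x # xs) st)"

definition SC :: "vpat \<Rightarrow> nat list \<Rightarrow> nat list" where
  "SC \<sigma> \<tau> = sc_aux \<sigma> \<tau> []"

definition west_s :: "nat list \<Rightarrow> nat list" where
  "west_s = SC ([2, 1], {})"

definition Sort :: "nat \<Rightarrow> (nat list \<Rightarrow> nat list) \<Rightarrow> nat list set" where
  "Sort n F = {\<tau> \<in> perms n. west_s (F \<tau>) = [1..<n+1]}"

end

theory Submission
  imports Defs "HOL-Library.Sublist" "HOL-Library.Multiset"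
begin

(* While the stack avoids sigma, read top to bottom it is the reversal of the input read so far.
   Hence if tau avoids rev(sigma), nothing is popped before the end and SC_sigma(tau) = rev tau,
   which West's map sorts iff rev tau avoids 231 (Knuth), i.e. iff tau avoids 132.
   If tau contains rev(sigma), some stack entry z is popped because pushing the next entry x would
   create sigma. Since sigma begins with a descent of length three (this is all that is used), such
   an occurrence uses x, z and an entry d further down with d < z < x. Once x is pushed, d is still
   below it, so z, x, d appear in this order in the output: a 231, which s does not sort. If x
   cannot be pushed right after z is popped, the same argument applies to the next stack entry. *)

section \<open>Occurrences of vincular patterns\<close>

definition is_occurrence :: "nat list \<Rightarrow> nat list \<Rightarrow> nat set \<Rightarrow> (nat \<Rightarrow> nat) \<Rightarrow> bool" where
  "is_occurrence xs p U f \<longleftrightarrow>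
     strict_mono_on {0..<length p} f \<and>
     (\<forall>i<length p. f i < length xs) \<and>
     (\<forall>i<length p. \<forall>j<length p. xs ! f i < xs ! f j \<longleftrightarrow> p ! i < p ! j) \<and>
     (\<forall>i. Suc i < length p \<and> i \<in> U \<and> Suc i \<in> U \<longrightarrow> f (Suc i) = Suc (f i))"

lemma vcontains_iff_occurrence: "vcontains xs (p, U) \<longleftrightarrow> (\<exists>f. is_occurrence xs p U f)"
  by (simp add: vcontains_def is_occurrence_def)

lemma strict_mono_on_atLeastLessThanD:
  "strict_mono_on {0..<m} f \<Longrightarrow> (i :: nat) < j \<Longrightarrow> j < m \<Longrightarrow> f i < f j"
  by (simp add: strict_mono_on_def)

lemma vcontains_length_le:
  assumes "vcontains xs (p, U)"
  shows "length p \<le> length xs"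
proof -
  obtain f where "strict_mono_on {0..<length p} f" "\<forall>i<length p. f i < length xs"
    using assms by (auto simp: vcontains_iff_occurrence is_occurrence_def)
  then have "card {0..<length p} \<le> card {0..<length xs}"
    by (intro card_inj_on_le[of f]) (auto intro: strict_mono_on_imp_inj_on)
  then show ?thesis by simp
qed

lemma vcontains_append_left:
  assumes "vcontains ys \<sigma>"
  shows "vcontains (xs @ ys) \<sigma>"
proof -
  obtain p U where \<sigma>: "\<sigma> = (p, U)" by fastforce
  obtain f where "is_occurrence ys p U f"
    using assms by (auto simp: \<sigma> vcontains_iff_occurrence)
  then have "is_occurrence (xs @ ys) p U (\<lambda>i. length xs + f i)"
    by (auto simp: is_occurrence_def strict_mono_on_def nth_append)
  then show ?thesis by (auto simp: \<sigma> vcontains_iff_occurrence)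
qed

lemma vavoids_append_leftD: "vavoids (xs @ ys) \<sigma> \<Longrightarrow> vavoids ys \<sigma>"
  by (auto simp: vavoids_def intro: vcontains_append_left)

lemma vcontains_delete_unused_entry:
  assumes occ: "is_occurrence (xs @ y # ys) p U f" and unused: "\<forall>i<length p. f i \<noteq> length xs"
  shows "vcontains (xs @ ys) (p, U)"
proof -
  define g where "g i = (if f i < length xs then f i else f i - 1)" for i
  have nth_g: "g i < length (xs @ ys) \<and> (xs @ ys) ! g i = (xs @ y # ys) ! f i"
    if "i < length p" for i
  proof -
    have "f i \<noteq> length xs" "f i < Suc (length xs + length ys)"
      using occ unused that by (auto simp: is_occurrence_def)
    then show ?thesis
      by (cases "f i < length xs") (auto simp: g_def nth_append)
  qed
  have "strict_mono_on {0..<length p} g"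
  proof (rule strict_mono_onI)
    fix i j assume "i \<in> {0..<length p}" "j \<in> {0..<length p}" "i < j"
    then have "f i < f j" "f i \<noteq> length xs" "f j \<noteq> length xs"
      using occ unused by (auto simp: is_occurrence_def strict_mono_on_def)
    then show "g i < g j" by (auto simp: g_def)
  qed
  moreover have "g (Suc i) = Suc (g i)"
    if "Suc i < length p" "i \<in> U" "Suc i \<in> U" for i
  proof -
    have "f (Suc i) = Suc (f i)" "f i \<noteq> length xs" "f (Suc i) \<noteq> length xs"
      using occ unused that by (auto simp: is_occurrence_def)
    then show ?thesis by (auto simp: g_def)
  qed
  ultimately have "is_occurrence (xs @ ys) p U g"
    using occ nth_g by (simp add: is_occurrence_def)
  then show ?thesis by (auto simp: vcontains_iff_occurrence)
qed

lemma vcontains_rev: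
  assumes U: "U \<subseteq> {0..<length p}" and "vcontains xs (p, U)"
  shows "vcontains (rev xs) (vrev (p, U))"
proof -
  define m n where "m = length p" and "n = length xs"
  obtain f where occ: "is_occurrence xs p U f"
    using assms(2) by (auto simp: vcontains_iff_occurrence)
  then have f_less: "f i < n" if "i < m" for i
    using that by (simp add: is_occurrence_def m_def n_def)
  define g where "g i = n - 1 - f (m - 1 - i)" for i
  have nth_g: "rev xs ! g i = xs ! f (m - 1 - i)" if "i < m" for i
    using f_less[of "m - 1 - i"] that by (simp add: g_def rev_nth n_def Suc_diff_Suc)
  have "strict_mono_on {0..<m} g"
  proof (rule strict_mono_onI)
    fix i j assume "i \<in> {0..<m}" "j \<in> {0..<m}" "i < j"
    then have "f (m - 1 - j) < f (m - 1 - i)" "f (m - 1 - i) < n"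
      using occ f_less
        by (auto simp: is_occurrence_def m_def intro: strict_mono_on_atLeastLessThanD)
    then show "g i < g j" by (simp add: g_def)
  qed
  moreover have "g i < length (rev xs)" if "i < m" for i
    using f_less[of "m - 1 - i"] that by (simp add: g_def n_def)
  moreover have "rev xs ! g i < rev xs ! g j \<longleftrightarrow> rev p ! i < rev p ! j"
    if "i < m" "j < m" for i j
    using occ that by (simp add: nth_g rev_nth is_occurrence_def m_def)
  moreover have "g (Suc i) = Suc (g i)"
    if "Suc i < m" and adj: "i \<in> (\<lambda>i. m - 1 - i) ` U" "Suc i \<in> (\<lambda>i. m - 1 - i) ` U" for i
  proof -
    obtain u v where uv: "u \<in> U" "v \<in> U" "i = m - 1 - u" "Suc i = m - 1 - v"
      using adj by blast
    moreover have "u < m" "v < m"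
      using U uv by (auto simp: m_def)
    ultimately have "u = Suc v" "m - 1 - Suc i = v"
      by arith+
    then have "f u = Suc (f v)" "f u < n"
      using occ f_less[OF \<open>u < m\<close>] uv \<open>u < m\<close> by (auto simp: is_occurrence_def m_def)
    then show ?thesis
      using uv \<open>u = Suc v\<close> \<open>m - 1 - Suc i = v\<close> by (simp add: g_def)
  qed
  ultimately have "is_occurrence (rev xs) (rev p) ((\<lambda>i. m - 1 - i) ` U) g"
    by (simp add: is_occurrence_def m_def)
  then show ?thesis by (auto simp: vrev_def vcontains_iff_occurrence m_def)
qed

lemma vrev_vrev:
  assumes "U \<subseteq> {0..<length p}"
  shows "vrev (vrev (p, U)) = (p, U)"
proof -
  have "\<forall>u\<in>U. length p - 1 - (length p - 1 - u) = u"
    using assms by auto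
  then have "(\<lambda>i. length p - 1 - i) ` (\<lambda>i. length p - 1 - i) ` U = U"
    by (force simp: image_image)
  then show ?thesis by (simp add: vrev_def)
qed

lemma vcontains_rev_iff:
  assumes "U \<subseteq> {0..<length p}"
  shows "vcontains (rev xs) (p, U) \<longleftrightarrow> vcontains xs (vrev (p, U))"
proof
  show "vcontains (rev xs) (p, U) \<Longrightarrow> vcontains xs (vrev (p, U))"
    using vcontains_rev[OF assms, of "rev xs"] by simp
  have "(\<lambda>i. length p - 1 - i) ` U \<subseteq> {0..<length (rev p)}"
    using assms by auto
  then show "vcontains xs (vrev (p, U)) \<Longrightarrow> vcontains (rev xs) (p, U)"
    using vcontains_rev[of "(\<lambda>i. length p - 1 - i) ` U" "rev p" xs] vrev_vrev[OF assms]
    by (simp add: vrev_def)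
qed

lemma subseq_iff_index_map:
  "subseq ys xs \<longleftrightarrow>
     (\<exists>f. strict_mono_on {0..<length ys} f \<and> (\<forall>i<length ys. f i < length xs \<and> xs ! f i = ys ! i))"
  (is "_ \<longleftrightarrow> (\<exists>f. ?index_map ys xs f)")
proof
  show "subseq ys xs \<Longrightarrow> \<exists>f. ?index_map ys xs f"
  proof (induction rule: list_emb.induct)
    case (list_emb_Nil xs)
    then show ?case by (auto simp: strict_mono_on_def)
  next
    case (list_emb_Cons ys xs x)
    then obtain f where "?index_map ys xs f"
      by blast
    then show ?case
      by (intro exI[of _ "Suc \<circ> f"]) (auto simp: strict_mono_on_def)
  next
    case (list_emb_Cons2 y x ys xs)
    then obtain f where "?index_map ys xs f"
      by blast
    then show ?case
      using \<open>y = x\<close> by (intro exI[of _ "case_nat 0 (Suc \<circ> f)"])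
        (auto simp: strict_mono_on_def nth_Cons split: nat.split)
  qed
next
  assume "\<exists>f. ?index_map ys xs f"
  then obtain f where f: "strict_mono_on {0..<length ys} f"
    "\<forall>i<length ys. f i < length xs \<and> xs ! f i = ys ! i"
    by blast
  have "subseq (map f [0..<length ys]) [0..<length xs]"
    using f by (intro sorted_subset_imp_subseq)
      (auto simp: sorted_wrt_iff_nth_less strict_mono_on_def)
  then have "subseq (map ((!) xs) (map f [0..<length ys])) (map ((!) xs) [0..<length xs])"
    by (rule subseq_map)
  moreover have "map ((!) xs) (map f [0..<length ys]) = ys"
    using f by (intro nth_equalityI) auto
  ultimately show "subseq ys xs"
    by (simp add: map_nth)
qed

lemma vcontains_classical_iff:
  "vcontains xs (p, {}) \<longleftrightarrow>
     (\<exists>ys. subseq ys xs \<and> length ys = length p \<and>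
       (\<forall>i<length p. \<forall>j<length p. ys ! i < ys ! j \<longleftrightarrow> p ! i < p ! j))"
  (is "_ \<longleftrightarrow> (\<exists>ys. ?occurs ys)")
proof
  assume "vcontains xs (p, {})"
  then obtain f where f: "is_occurrence xs p {} f"
    by (auto simp: vcontains_iff_occurrence)
  define ys where "ys = map (\<lambda>i. xs ! f i) [0..<length p]"
  have "subseq ys xs"
    using f by (auto simp: subseq_iff_index_map ys_def is_occurrence_def)
  then show "\<exists>ys. ?occurs ys"
    using f by (intro exI[of _ ys]) (auto simp: ys_def is_occurrence_def)
next
  assume "\<exists>ys. ?occurs ys"
  then obtain ys f where "length ys = length p"
    "\<forall>i<length p. \<forall>j<length p. ys ! i < ys ! j \<longleftrightarrow> p ! i < p ! j"
    "strict_mono_on {0..<length ys} f" "\<forall>i<length ys. f i < length xs \<and> xs ! f i = ys ! i"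
    by (auto simp: subseq_iff_index_map)
  then have "is_occurrence xs p {} f"
    by (simp add: is_occurrence_def)
  then show "vcontains xs (p, {})"
    by (auto simp: vcontains_iff_occurrence)
qed

lemma vcontains_21_iff: "vcontains xs ([2, 1], {}) \<longleftrightarrow> (\<exists>a b. b < a \<and> subseq [a, b] xs)"
  by (fastforce simp: vcontains_classical_iff length_Suc_conv numeral_2_eq_2 All_less_Suc2)

lemma vcontains_231_iff:
  "vcontains xs ([2, 3, 1], {}) \<longleftrightarrow> (\<exists>a b c. a < b \<and> b < c \<and> subseq [b, c, a] xs)"
  by (fastforce simp: vcontains_classical_iff length_Suc_conv numeral_3_eq_3 numeral_2_eq_2
      All_less_Suc2)

lemma sorted_iff_no_subseq_descent:
  "sorted xs \<longleftrightarrow> \<not> (\<exists>a b. b < a \<and> subseq [a, b] (xs :: 'a::linorder list))"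
proof (induction xs)
  case (Cons x xs)
  have "subseq [a, b] (x # xs) \<longleftrightarrow> (a = x \<and> b \<in> set xs) \<or> subseq [a, b] xs" for a b
    by (cases "a = x") (auto simp: subseq_singleton_left dest: subseq_Cons')
  then show ?case using Cons by (auto simp: not_less)
qed simp

lemma vavoids_21_iff_sorted: "vavoids xs ([2, 1], {}) \<longleftrightarrow> sorted xs"
  unfolding vavoids_def vcontains_21_iff sorted_iff_no_subseq_descent by blast

lemma mset_sc_aux: "mset (sc_aux \<sigma> xs st) = mset xs + mset st"
  by (induction \<sigma> xs st rule: sc_aux.induct) auto

lemma set_sc_aux: "set (sc_aux \<sigma> xs st) = set xs \<union> set st"
  by (induction \<sigma> xs st rule: sc_aux.induct) auto

lemma sc_aux_no_pop: "vavoids (rev xs @ st) \<sigma> \<Longrightarrow> sc_aux \<sigma> xs st = rev xs @ st"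
proof (induction \<sigma> xs st rule: sc_aux.induct)
  case (3 \<sigma> x xs y st)
  then have "vavoids (x # y # st) \<sigma>"
    using vavoids_append_leftD[of "rev xs" "x # y # st"] by simp
  then show ?case using 3 by simp
qed simp_all

lemma subseq_stack_sc_aux: "subseq st (sc_aux \<sigma> xs st)"
  by (induction \<sigma> xs st rule: sc_aux.induct) (auto dest: subseq_Cons')

lemma mset_west_SC: "mset (west_s (SC \<sigma> \<tau>)) = mset \<tau>"
  by (simp add: west_s_def SC_def mset_sc_aux)

section \<open>Knuth's theorem\<close>

(* sigma is abstracted to the one property that makes sc_aux West's stack sort, so that
   sc_aux.induct applies; vavoids_21_iff_sorted instantiates it. In the first lemma, b has to be
   popped before c can be pushed, while a is still unread. *)
lemma stack_sort_not_sorted_if_stack_entry: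
  "(\<And>zs. vavoids zs \<sigma> \<longleftrightarrow> sorted zs) \<Longrightarrow> sorted st \<Longrightarrow> b \<in> set st \<Longrightarrow> subseq [c, a] xs
   \<Longrightarrow> a < b \<Longrightarrow> b < c \<Longrightarrow> \<not> sorted (sc_aux \<sigma> xs st)"
proof (induction \<sigma> xs st rule: sc_aux.induct)
  case (3 \<sigma> x xs y st)
  show ?case
  proof (cases "sorted (x # y # st)")
    case True
    then have "x \<noteq> c"
      using "3.prems"(3,6) by auto
    then have "subseq [c, a] xs"
      using "3.prems"(4) by simp
    moreover have "vavoids (x # y # st) \<sigma>"
      using True "3.prems"(1) by blast
    ultimately show ?thesis
      using "3.IH"(1) True "3.prems" by simp
  next
    case False
    then have no_push: "\<not> vavoids (x # y # st) \<sigma>"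
      using "3.prems"(1) by blast
    then have pop: "sc_aux \<sigma> (x # xs) (y # st) = y # sc_aux \<sigma> (x # xs) st"
      by simp
    show ?thesis
    proof (cases "y = b")
      case True
      have "subseq [a] (x # xs)"
        using "3.prems"(4) by (rule subseq_Cons')
      then have "a \<in> set (sc_aux \<sigma> (x # xs) st)"
        unfolding subseq_singleton_left by (auto simp: set_sc_aux)
      then show ?thesis
        using True "3.prems"(5) pop by (auto simp: not_le)
    next
      case False
      then show ?thesis
        using "3.IH"(2) no_push pop "3.prems" by simp
    qed
  qed
qed simp_all

lemma stack_sort_not_sorted_if_231:
  "(\<And>zs. vavoids zs \<sigma> \<longleftrightarrow> sorted zs) \<Longrightarrow> sorted st \<Longrightarrow> subseq [b, c, a] xs
   \<Longrightarrow> a < b \<Longrightarrow> b < c \<Longrightarrow> \<not> sorted (sc_aux \<sigma> xs st)"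
proof (induction \<sigma> xs st rule: sc_aux.induct)
  case (2 \<sigma> x xs)
  then show ?case
    using stack_sort_not_sorted_if_stack_entry[of \<sigma> "[x]" b c a xs]
    by (cases "x = b") auto
next
  case (3 \<sigma> x xs y st)
  show ?case
  proof (cases "sorted (x # y # st)")
    case True
    then have push: "vavoids (x # y # st) \<sigma>"
      using "3.prems"(1) by blast
    moreover have "\<not> sorted (sc_aux \<sigma> xs (x # y # st))"
    proof (cases "x = b")
      case True
      then have "subseq [c, a] xs"
        using "3.prems"(3) by simp
      then show ?thesis
        using stack_sort_not_sorted_if_stack_entry[OF "3.prems"(1) \<open>sorted (x # y # st)\<close>]
          True "3.prems"(4,5)
        by (meson list.set_intros(1))
    next
      case False
      then show ?thesis
        using "3.IH"(1) push \<open>sorted (x # y # st)\<close> "3.prems" by simp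
    qed
    ultimately show ?thesis
      by simp
  next
    case False
    then have no_push: "\<not> vavoids (x # y # st) \<sigma>"
      using "3.prems"(1) by blast
    have "sorted st"
      using "3.prems"(2) by simp
    then have "\<not> sorted (sc_aux \<sigma> (x # xs) st)"
      using "3.IH"(2)[OF no_push "3.prems"(1) _ "3.prems"(3-5)] by blast
    then show ?thesis
      using no_push by simp
  qed
qed simp

(* Invariant: the stack read bottom to top, followed by the unread input, is a subsequence of pi.
   An entry y is popped only below a larger x, so a smaller entry a read later would give the 231
   y, x, a. *)
lemma stack_sort_sorted_if_avoids_231:
  "(\<And>zs. vavoids zs \<sigma> \<longleftrightarrow> sorted zs) \<Longrightarrow> sorted st \<Longrightarrow> subseq (rev st @ xs) \<pi>
   \<Longrightarrow> vavoids \<pi> ([2, 3, 1], {}) \<Longrightarrow> sorted (sc_aux \<sigma> xs st)"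
proof (induction \<sigma> xs st rule: sc_aux.induct)
  case (3 \<sigma> x xs y st)
  show ?case
  proof (cases "sorted (x # y # st)")
    case True
    then have "vavoids (x # y # st) \<sigma>"
      using "3.prems"(1) by blast
    then show ?thesis
      using "3.IH"(1) True "3.prems" by simp
  next
    case False
    then have no_push: "\<not> vavoids (x # y # st) \<sigma>"
      using "3.prems"(1) by blast
    then have pop: "sc_aux \<sigma> (x # xs) (y # st) = y # sc_aux \<sigma> (x # xs) st"
      by simp
    have "y < x"
      using False "3.prems"(2) by auto
    have in_\<pi>: "subseq (rev st @ y # x # xs) \<pi>"
      using "3.prems"(3) by simp
    moreover have "subseq (rev st @ x # xs) (rev st @ y # x # xs)"
      unfolding subseq_append' by (rule list_emb_Cons) (rule subseq_order.refl)
    ultimately have "subseq (rev st @ x # xs) \<pi>"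
      by (blast intro: subseq_order.trans)
    then have "sorted (sc_aux \<sigma> (x # xs) st)"
      using "3.IH"(2) no_push "3.prems" by simp
    moreover have "y \<le> a" if "a \<in> set xs" for a
    proof (rule ccontr)
      assume "\<not> y \<le> a"
      have "subseq [y, x, a] (y # x # xs)"
        using that by (simp add: subseq_singleton_left)
      then have "subseq [y, x, a] \<pi>"
        using in_\<pi> by (blast intro: subseq_order.trans list_emb_append2)
      then show False
        using \<open>\<not> y \<le> a\<close> \<open>y < x\<close> "3.prems"(4) unfolding vavoids_def vcontains_231_iff
        by (auto simp: not_le)
    qed
    ultimately show ?thesis
      using pop \<open>y < x\<close> "3.prems"(2) by (auto simp: set_sc_aux)
  qed
qed simp_all

theorem west_sorted_iff_avoids_231: "sorted (west_s \<pi>) \<longleftrightarrow> vavoids \<pi> ([2, 3, 1], {})"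
proof
  show "sorted (west_s \<pi>) \<Longrightarrow> vavoids \<pi> ([2, 3, 1], {})"
    using stack_sort_not_sorted_if_231[OF vavoids_21_iff_sorted, of "[]"]
    unfolding west_s_def SC_def vavoids_def vcontains_231_iff by auto
  show "vavoids \<pi> ([2, 3, 1], {}) \<Longrightarrow> sorted (west_s \<pi>)"
    using stack_sort_sorted_if_avoids_231[OF vavoids_21_iff_sorted, of "[]" \<pi> \<pi>]
    unfolding west_s_def SC_def by simp
qed

section \<open>Patterns starting with a descent of length three\<close>

lemma vcontains_Cons_Cons_descent:
  assumes descent: "3 \<le> length p" "p ! 2 < p ! 1" "p ! 1 < p ! 0"
    and "vcontains (x # z # st) (p, U)"
    and "vavoids (z # st) (p, U)" "vavoids (x # st) (p, U)"
  shows "\<exists>d\<in>set st. d < z \<and> z < x"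
proof -
  obtain f where occ: "is_occurrence (x # z # st) p U f"
    using assms(4) by (auto simp: vcontains_iff_occurrence)
  then have sm: "strict_mono_on {0..<length p} f"
    and f_less: "\<forall>i<length p. f i < length (x # z # st)"
    and iso: "\<forall>i<length p. \<forall>j<length p. (x # z # st) ! f i < (x # z # st) ! f j \<longleftrightarrow> p ! i < p ! j"
    by (simp_all add: is_occurrence_def)
  have "0 < f 1" "f 1 < f 2"
    using strict_mono_on_atLeastLessThanD[OF sm, of 0 1]
      strict_mono_on_atLeastLessThanD[OF sm, of 1 2] descent(1)
    by auto
  obtain i where "i < length p" "f i = 0"
    using vcontains_delete_unused_entry[of "[]" x "z # st" p U f] occ assms(5)
      by (auto simp: vavoids_def)
  then have f0: "f 0 = 0"
    using strict_mono_on_atLeastLessThanD[OF sm, of 0 i] by (cases "i = 0") auto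
  obtain j where "j < length p" "f j = 1"
    using vcontains_delete_unused_entry[of "[x]" z st p U f] occ assms(6)
      by (auto simp: vavoids_def)
  moreover have "j \<noteq> 0"
    using f0 \<open>f j = 1\<close> by (cases j) auto
  ultimately have f1: "f 1 = 1"
    using strict_mono_on_atLeastLessThanD[OF sm, of 1 j] \<open>0 < f 1\<close> by (cases "j = 1") auto
  define d where "d = st ! (f 2 - 2)"
  have "f 2 < length st + 2"
    using f_less descent(1) by auto
  then have d: "d \<in> set st" "(x # z # st) ! f 2 = d"
    using \<open>f 1 < f 2\<close> f1 by (auto simp: d_def nth_Cons' numeral_2_eq_2)
  have "0 < length p" "1 < length p" "2 < length p"
    using descent(1) by auto
  then have "(x # z # st) ! f 2 < (x # z # st) ! f 1" "(x # z # st) ! f 1 < (x # z # st) ! f 0"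
    using iso descent(2,3) by blast+
  with d f0 f1 show ?thesis
    by auto
qed

lemma sc_aux_pop_contains_231:
  assumes descent: "3 \<le> length p" "p ! 2 < p ! 1" "p ! 1 < p ! 0"
  shows "vavoids (z # st) (p, U) \<Longrightarrow> vcontains (x # z # st) (p, U)
    \<Longrightarrow> vcontains (z # sc_aux (p, U) (x # xs) st) ([2, 3, 1], {})"
proof (induction st arbitrary: z)
  case Nil
  then show ?case
    using vcontains_length_le[of "[x, z]" p U] descent(1) by simp
next
  case (Cons y st)
  show ?case
  proof (cases "vavoids (x # y # st) (p, U)")
    case True
    then obtain d where "d \<in> set (y # st)" "d < z" "z < x"
      using vcontains_Cons_Cons_descent[OF descent Cons.prems(2,1)] by blast
    then have "subseq [x, d] (x # y # st)"
      by (auto simp: subseq_singleton_left)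
    then have "subseq [x, d] (sc_aux (p, U) xs (x # y # st))"
      using subseq_stack_sc_aux by (rule subseq_order.trans)
    then have "subseq [z, x, d] (z # sc_aux (p, U) (x # xs) (y # st))"
      using True by simp
    then show ?thesis
      using \<open>d < z\<close> \<open>z < x\<close> unfolding vcontains_231_iff by blast
  next
    case False
    then have "vcontains (y # sc_aux (p, U) (x # xs) st) ([2, 3, 1], {})"
      using Cons.IH Cons.prems(1) vavoids_append_leftD[of "[z]"] by (simp add: vavoids_def)
    then show ?thesis
      using False vcontains_append_left[of _ _ "[z]"] by simp
  qed
qed

lemma sc_aux_contains_231:
  assumes descent: "3 \<le> length p" "p ! 2 < p ! 1" "p ! 1 < p ! 0"
  shows "vavoids st (p, U) \<Longrightarrow> vcontains (rev xs @ st) (p, U)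
    \<Longrightarrow> vcontains (sc_aux (p, U) xs st) ([2, 3, 1], {})"
proof (induction xs arbitrary: st)
  case Nil
  then show ?case
    by (simp add: vavoids_def)
next
  case (Cons x xs)
  show ?case
  proof (cases st)
    case Nil
    have "vavoids [x] (p, U)"
      using vcontains_length_le[of "[x]" p U] descent(1) by (auto simp: vavoids_def)
    then show ?thesis
      using Cons Nil by simp
  next
    case (Cons y st')
    show ?thesis
    proof (cases "vavoids (x # y # st') (p, U)")
      case True
      then show ?thesis
        using Cons.IH[of "x # y # st'"] Cons.prems \<open>st = y # st'\<close> by simp
    next
      case False
      then have "vcontains (y # sc_aux (p, U) (x # xs) st') ([2, 3, 1], {})"
        using sc_aux_pop_contains_231[OF descent] Cons.prems \<open>st = y # st'\<close>
          by (simp add: vavoids_def)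
      then show ?thesis
        using False \<open>st = y # st'\<close> by simp
    qed
  qed
qed

lemma sorted_west_SC_iff:
  assumes descent: "3 \<le> length p" "p ! 2 < p ! 1" "p ! 1 < p ! 0"
    and U: "U \<subseteq> {0..<length p}"
  shows "sorted (west_s (SC (p, U) \<tau>)) \<longleftrightarrow> vavoids \<tau> (vrev (p, U)) \<and> vavoids \<tau> ([1, 3, 2], {})"
proof (cases "vavoids \<tau> (vrev (p, U))")
  case True
  then have "SC (p, U) \<tau> = rev \<tau>"
    using sc_aux_no_pop[of \<tau> "[]"] vcontains_rev_iff[OF U] by (simp add: SC_def vavoids_def)
  moreover have "vavoids (rev \<tau>) ([2, 3, 1], {}) \<longleftrightarrow> vavoids \<tau> ([1, 3, 2], {})"
    using vcontains_rev_iff[of "{}" "[2, 3, 1]" \<tau>] unfolding vavoids_def vrev_def by simp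
  ultimately show ?thesis
    using True by (simp add: west_sorted_iff_avoids_231)
next
  case False
  then have "vcontains (rev \<tau> @ []) (p, U)"
    using vcontains_rev_iff[OF U] by (simp add: vavoids_def)
  moreover have "vavoids [] (p, U)"
    using vcontains_length_le[of "[]" p U] descent(1) by (auto simp: vavoids_def)
  ultimately have "vcontains (SC (p, U) \<tau>) ([2, 3, 1], {})"
    using sc_aux_contains_231[OF descent] unfolding SC_def by blast
  then show ?thesis
    using False unfolding west_sorted_iff_avoids_231 vavoids_def by blast
qed

lemma sorted_iff_eq_if_mset_eq: "sorted ys \<Longrightarrow> mset xs = mset ys \<Longrightarrow> sorted xs \<longleftrightarrow> xs = ys"
  by (metis properties_for_sort sorted_sort_id)

lemma mset_perms:
  assumes "\<tau> \<in> perms n"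
  shows "mset \<tau> = mset [1..<n + 1]"
proof -
  have "set [1..<n + 1] = {1..n}"
    by auto
  then show ?thesis
    using assms set_eq_iff_mset_eq_distinct[of \<tau> "[1..<n + 1]"]
      by (simp add: perms_def del: upt_Suc)
qed

theorem mainTheorem4:
  fixes k n :: nat and U :: "nat set"
  assumes "k \<ge> 3" and "U \<subseteq> {0..<k}" and "n \<ge> 1"
  shows "Sort n (SC (rev [1..<k+1], U)) = Av n [vrev (rev [1..<k+1], U), ([1, 3, 2], {})]"
proof -
  define p where "p = rev [1..<k+1]"
  have "length p = k" "p ! 0 = k" "p ! 1 = k - 1" "p ! 2 = k - 2"
    using assms(1) by (simp_all add: p_def rev_nth)
  then have descent: "3 \<le> length p" "p ! 2 < p ! 1" "p ! 1 < p ! 0" and U: "U \<subseteq> {0..<length p}"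
    using assms(1,2) by auto
  have "west_s (SC (p, U) \<tau>) = [1..<n+1] \<longleftrightarrow> vavoids \<tau> (vrev (p, U)) \<and> vavoids \<tau> ([1, 3, 2], {})"
    if "\<tau> \<in> perms n" for \<tau>
  proof -
    have "mset (west_s (SC (p, U) \<tau>)) = mset [1..<n+1]"
      using mset_perms[OF that] by (simp only: mset_west_SC)
    then have "west_s (SC (p, U) \<tau>) = [1..<n+1] \<longleftrightarrow> sorted (west_s (SC (p, U) \<tau>))"
      using sorted_iff_eq_if_mset_eq[OF sorted_upt] by blast
    then show ?thesis
      using sorted_west_SC_iff[OF descent U] by blast
  qed
  then show ?thesis
    unfolding Sort_def Av_def p_def[symmetric] by auto
qed

end
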